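(* Let $\langle Q,A,\delta,\{q_0\},F\rangle$ be a transitive group automaton with $F\neq\emptyset$, let $k\in\mathbb{N}$, and let $\langle Q_k,A,\delta_k,I_k,F_k\rangle$ be the $k$-digit buffer over it. Let $x\in A^{\mathbb{N}}$ be normal and $s\in Q_k$. Then there is a subset $Q'\subseteq Q_k$ such that: $Q'$ is closed under $\delta_k$ and for all $s_1,s_2\in Q'$ there is a word $u\in A^*$ with $s_1\xrightarrow{u}s_2$ (i.e. the restricted automaton on $Q'$ is transitive); $F_k\cap Q'\neq\emptyset$; the second coordinate of $\widetilde{T}^i(x,s)$ lies in $Q'$ for all sufficiently large $i$; and every word in $A^k$ appears as the second coordinate of some element of $Q'$ (i.e. for each $v\in A^k$ there is $(q,v)\in Q'$).
   Context: An automaton is transitive if for all states $q_1,q_2$ there is a word $w$ with $q_1\xrightarrow{w}q_2$. A group automaton is a deterministic automaton in which, for each symbol $a$, the map $p\mapsto\delta(p,a)$ is a permutation of the states. The $k$-digit buffer over $\langle Q,A,\delta,\{q_0\},F\rangle$ is the automaton with state set $Q_k=Q\times A^k$, final states $F_k=F\times A^k$, initial state set $I_k=\{(q_0,w_0)\}$ for some fixed $w_0\in A^k$, and transition function $\delta_k((q,w),a)=(\delta(q,a),w)$ if $\delta(q,a)\notin F$, and $\delta_k((q,w),a)=(\delta(q,a),w[2..k]a)$ if $\delta(q,a)\in F$. For $X=A^{\mathbb{N}}$ with shift $T$ ($(Tx)_i=x_{i+1}$), the augmented map on $X\times Q_k$ is $\widetilde{T}(x,s)=(Tx,\delta_k(s,x_1))$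 where $x=x_1x_2\cdots$. A sequence $x$ is normal if every word $w\in A^*$ occurs in $x$ with limiting frequency $(\#A)^{-|w|}$. *)

theory Defs
  imports "HOL-Analysis.Analysis"
begin

definition delta_star :: "('q \<Rightarrow> 'a \<Rightarrow> 'q) \<Rightarrow> 'q \<Rightarrow> 'a list \<Rightarrow> 'q" where
  "delta_star \<delta> q w = fold (\<lambda>a p. \<delta> p a) w q"

definition transitive_aut :: "('q \<Rightarrow> 'a \<Rightarrow> 'q) \<Rightarrow> bool" where
  "transitive_aut \<delta> \<longleftrightarrow> (\<forall>q1 q2. \<exists>w. delta_star \<delta> q1 w = q2)"

definition group_aut :: "('q \<Rightarrow> 'a \<Rightarrow> 'q) \<Rightarrow> bool" where
  "group_aut \<delta> \<longleftrightarrow> (\<forall>a. bij (\<lambda>p. \<delta> p a))"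

text \<open>When the new state is final, the buffer drops its first letter and appends a
  (w[2..k]a, written drop 1 (w @ [a]), which has length k also for k = 0).\<close>

definition buffer_states :: "nat \<Rightarrow> ('q \<times> 'a list) set" where
  "buffer_states k = {(q, w). length w = k}"

definition buffer_final :: "'q set \<Rightarrow> nat \<Rightarrow> ('q \<times> 'a list) set" where
  "buffer_final F k = {(q, w). q \<in> F \<and> length w = k}"

definition buffer_delta :: "('q \<Rightarrow> 'a \<Rightarrow> 'q) \<Rightarrow> 'q set \<Rightarrow> ('q \<times> 'a list) \<Rightarrow> 'a \<Rightarrow> ('q \<times> 'a list)" where
  "buffer_delta \<delta> F s a =
     (let q' = \<delta> (fst s) a in
      if q' \<in> F then (q', drop 1 (snd s @ [a])) else (q', snd s))"

definition aug_map :: "('q \<Rightarrow> 'a \<Rightarrow> 'q) \<Rightarrow> 'q set \<Rightarrow>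
    (nat \<Rightarrow> 'a) \<times> ('q \<times> 'a list) \<Rightarrow> (nat \<Rightarrow> 'a) \<times> ('q \<times> 'a list)" where
  "aug_map \<delta> F p = (\<lambda>i. fst p (Suc i), buffer_delta \<delta> F (snd p) (fst p 0))"

definition occurs_at :: "(nat \<Rightarrow> 'a) \<Rightarrow> 'a list \<Rightarrow> nat \<Rightarrow> bool" where
  "occurs_at x w i \<longleftrightarrow> (\<forall>j < length w. x (i + j) = w ! j)"

definition normal_seq :: "(nat \<Rightarrow> 'a::finite) \<Rightarrow> bool" where
  "normal_seq x \<longleftrightarrow> (\<forall>w :: 'a list.
     (\<lambda>n. real (card {i. i < n \<and> occurs_at x w i}) / real n)
       \<longlonglongrightarrow> 1 / real (CARD('a)) ^ length w)"

end

theory Submission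
  imports Defs
begin

text \<open>A state is recurrent if it can be reached back from every state reachable from it; the
  set \<open>Q'\<close> of states reachable from a recurrent state is then closed and strongly connected.
  In a finite closed system a state becomes recurrent once it is moved into a reachable set of
  minimal size, and composing such words over all buffer states gives a single word \<open>W\<close>
  sending every state to a recurrent one. A normal sequence contains \<open>W\<close>, so the orbit of
  the augmented map enters such a \<open>Q'\<close> and stays there. Because each letter permutes the
  finite set of states, iterating a letter from a final state returns to a final state; hence
  from a final state (reached by transitivity) the buffer can be loaded with any word while
  ending in a final state, and every buffer content occurs in \<open>Q'\<close>.\<close>

lemma delta_star_Nil [simp]: "delta_star d t [] = t"
  by (simp add: delta_star_def)

lemma delta_star_Cons [simp]: "delta_star d t (a # u) = delta_star d (d t a) u"
  by (simp add: delta_star_def)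

lemma delta_star_append [simp]: "delta_star d t (u @ v) = delta_star d (delta_star d t u) v"
  by (simp add: delta_star_def)

lemma delta_star_closed:
  assumes "\<forall>t\<in>S. \<forall>a. d t a \<in> S" "t \<in> S"
  shows "delta_star d t u \<in> S"
  using assms(2) by (induction u arbitrary: t) (auto simp: assms(1))

lemma reachable_trans:
  assumes "t' \<in> range (delta_star d t)" "t'' \<in> range (delta_star d t')"
  shows "t'' \<in> range (delta_star d t)"
proof -
  obtain u v where "t' = delta_star d t u" "t'' = delta_star d t' v"
    using assms by auto
  then have "t'' = delta_star d t (u @ v)" by simp
  then show ?thesis by blast
qed

lemma reachable_subset:
  "t' \<in> range (delta_star d t) \<Longrightarrow> range (delta_star d t') \<subseteq> range (delta_star d t)"
  using reachable_trans by (rule subsetI)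

lemma reachable_refl: "t \<in> range (delta_star d t)"
  using rangeI[of "delta_star d t" "[]"] by simp

lemma reachable_step:
  assumes "t' \<in> range (delta_star d t)"
  shows "d t' a \<in> range (delta_star d t)"
  using reachable_trans[OF assms, of "d t' a"] rangeI[of "delta_star d t'" "[a]"] by simp

definition recurrent :: "('s \<Rightarrow> 'b \<Rightarrow> 's) \<Rightarrow> 's \<Rightarrow> bool" where
  "recurrent d t \<longleftrightarrow> (\<forall>t'\<in>range (delta_star d t). t \<in> range (delta_star d t'))"

lemma recurrent_reachable:
  assumes "recurrent d t" "t' \<in> range (delta_star d t)"
  shows "recurrent d t'"
  unfolding recurrent_def
proof
  fix t'' assume "t'' \<in> range (delta_star d t')"
  then have "t'' \<in> range (delta_star d t)"
    by (rule reachable_trans[OF assms(2)])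
  then have "t \<in> range (delta_star d t'')"
    using assms(1) unfolding recurrent_def by blast
  then show "t' \<in> range (delta_star d t'')"
    by (rule reachable_trans[OF _ assms(2)])
qed

lemma recurrent_strongly_connected:
  assumes "recurrent d t" "s1 \<in> range (delta_star d t)" "s2 \<in> range (delta_star d t)"
  shows "\<exists>u. delta_star d s1 u = s2"
proof -
  have "t \<in> range (delta_star d s1)"
    using assms(1,2) unfolding recurrent_def by blast
  then have "s2 \<in> range (delta_star d s1)"
    by (rule reachable_trans[OF _ assms(3)])
  then show ?thesis by auto
qed

lemma ex_recurrent_reachable:
  assumes fin: "finite (range (delta_star d t))"
  shows "\<exists>u. recurrent d (delta_star d t u)"
proof -
  let ?R = "\<lambda>y. range (delta_star d y)"
  obtain t' where t': "t' \<in> ?R t" and least: "\<forall>y. y \<in> ?R t \<longrightarrow> card (?R t') \<le> card (?R y)"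
    using ex_has_least_nat[of "\<lambda>y. y \<in> ?R t" t "\<lambda>y. card (?R y)", OF reachable_refl] by blast
  have fin': "finite (?R t')"
    using finite_subset[OF reachable_subset[OF t'] fin] .
  have "recurrent d t'"
    unfolding recurrent_def
  proof
    fix t'' assume t'': "t'' \<in> ?R t'"
    have sub: "?R t'' \<subseteq> ?R t'"
      using reachable_subset[OF t''] .
    have "card (?R t') \<le> card (?R t'')"
      using least reachable_trans[OF t' t''] by simp
    then have "?R t'' = ?R t'"
      using card_subset_eq[OF fin' sub] card_mono[OF fin' sub] by linarith
    then show "t' \<in> ?R t''"
      using reachable_refl[of t' d] by simp
  qed
  then show ?thesis using t' by blast
qed

lemma ex_word_all_recurrent:
  assumes "finite T" "\<forall>t\<in>T. finite (range (delta_star d t))"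
  shows "\<exists>W. \<forall>t\<in>T. recurrent d (delta_star d t W)"
  using assms
proof (induction T rule: finite_induct)
  case empty
  then show ?case by simp
next
  case (insert t T)
  then obtain W where W: "\<forall>t'\<in>T. recurrent d (delta_star d t' W)" by auto
  have "finite (range (delta_star d t))"
    using insert.prems by simp
  then have "finite (range (delta_star d (delta_star d t W)))"
    by (rule finite_subset[OF reachable_subset[OF rangeI]])
  then obtain V where V: "recurrent d (delta_star d (delta_star d t W) V)"
    by (blast dest: ex_recurrent_reachable)
  have "recurrent d (delta_star d t' (W @ V))" if "t' \<in> T" for t'
    using recurrent_reachable[OF W[rule_format, OF that] rangeI] by simp
  with V have "\<forall>t'\<in>insert t T. recurrent d (delta_star d t' (W @ V))"
    by simp
  then show ?case by blast
qed

lemma delta_star_upt_reachable: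
  assumes "N \<le> i"
  shows "delta_star d s (map x [0..<i]) \<in> range (delta_star d (delta_star d s (map x [0..<N])))"
proof -
  have "[0..<i] = [0..<N] @ [N..<i]"
    using upt_add_eq_append[of 0 N "i - N"] assms by simp
  then show ?thesis by simp
qed

lemma ex_recurrent_prefix:
  assumes "finite S" "\<forall>t\<in>S. \<forall>a. d t a \<in> S" "s \<in> S"
    and occurs: "\<forall>w. \<exists>i. occurs_at x w i"
  shows "\<exists>N. recurrent d (delta_star d s (map x [0..<N]))"
proof -
  have "range (delta_star d t) \<subseteq> S" if "t \<in> S" for t
    using delta_star_closed[OF assms(2) that] by blast
  then have "\<forall>t\<in>S. finite (range (delta_star d t))"
    using finite_subset[OF _ assms(1)] by blast
  then obtain W where W: "\<forall>t\<in>S. recurrent d (delta_star d t W)"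
    using ex_word_all_recurrent[OF assms(1)] by blast
  obtain i where "occurs_at x W i" using occurs by blast
  then have "map x [i..<i + length W] = W"
    unfolding occurs_at_def by (intro nth_equalityI) auto
  then have "map x [0..<i + length W] = map x [0..<i] @ W"
    using upt_add_eq_append[of 0 i "length W"] by simp
  then have "recurrent d (delta_star d s (map x [0..<i + length W]))"
    using W delta_star_closed[OF assms(2,3)] by simp
  then show ?thesis by blast
qed

lemma normal_seq_occurs:
  fixes x :: "nat \<Rightarrow> 'a::finite"
  assumes "normal_seq x"
  shows "\<exists>i. occurs_at x w i"
proof (rule ccontr)
  assume "\<nexists>i. occurs_at x w i"
  then have no_occurrence: "(\<lambda>n. real (card {i. i < n \<and> occurs_at x w i}) / real n) = (\<lambda>n. 0)"
    by simp
  have "(\<lambda>n. real (card {i. i < n \<and> occurs_at x w i}) / real n)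
      \<longlonglongrightarrow> 1 / real CARD('a) ^ length w"
    using assms unfolding normal_seq_def by blast
  then have "1 / real CARD('a) ^ length w = 0"
    using LIMSEQ_unique[OF _ tendsto_const] unfolding no_occurrence by blast
  then show False by simp
qed

lemma aug_map_funpow:
  "(aug_map \<delta> F ^^ i) (x, s) = (\<lambda>j. x (j + i), delta_star (buffer_delta \<delta> F) s (map x [0..<i]))"
  by (induction i) (simp_all add: aug_map_def)

lemma length_snd_buffer_delta: "length (snd (buffer_delta \<delta> F t a)) = length (snd t)"
  by (simp add: buffer_delta_def Let_def del: drop_append)

lemma length_snd_delta_star_buffer:
  "length (snd (delta_star (buffer_delta \<delta> F) t u)) = length (snd t)"
  by (induction u arbitrary: t) (simp_all add: length_snd_buffer_delta)

lemma buffer_delta_in_states: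
  "t \<in> buffer_states k \<Longrightarrow> buffer_delta \<delta> F t a \<in> buffer_states k"
  using length_snd_buffer_delta[of \<delta> F t a] by (auto simp: buffer_states_def)

lemma finite_buffer_states: "finite (buffer_states k :: ('q::finite \<times> 'a::finite list) set)"
proof -
  have "buffer_states k = (UNIV :: 'q set) \<times> {w :: 'a list. set w \<subseteq> UNIV \<and> length w = k}"
    unfolding buffer_states_def by auto
  then show ?thesis
    using finite_lists_length_eq[of "UNIV :: 'a set" k] by simp
qed

lemma fst_delta_star_buffer:
  "fst (delta_star (buffer_delta \<delta> F) t u) = delta_star \<delta> (fst t) u"
  by (induction u arbitrary: t) (simp_all add: buffer_delta_def Let_def)

lemma buffer_delta_nonfinal: "\<delta> q a \<notin> F \<Longrightarrow> buffer_delta \<delta> F (q, w) a = (\<delta> q a, w)"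
  by (simp add: buffer_delta_def)

lemma buffer_delta_final: "\<delta> q a \<in> F \<Longrightarrow> buffer_delta \<delta> F (q, w) a = (\<delta> q a, drop 1 (w @ [a]))"
  by (simp add: buffer_delta_def)

lemma delta_star_buffer_replicate_nonfinal:
  assumes "\<And>i. 0 < i \<Longrightarrow> i \<le> j \<Longrightarrow> ((\<lambda>p. \<delta> p b) ^^ i) q \<notin> F"
  shows "delta_star (buffer_delta \<delta> F) (q, w) (replicate j b) = (((\<lambda>p. \<delta> p b) ^^ j) q, w)"
  using assms
proof (induction j)
  case 0
  then show ?case by simp
next
  case (Suc j)
  have "delta_star (buffer_delta \<delta> F) (q, w) (replicate (Suc j) b)
      = buffer_delta \<delta> F (delta_star (buffer_delta \<delta> F) (q, w) (replicate j b)) b"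
    by (simp add: replicate_append_same[symmetric])
  also have "\<dots> = buffer_delta \<delta> F (((\<lambda>p. \<delta> p b) ^^ j) q, w) b"
    using Suc.prems by (simp add: Suc.IH)
  also have "\<dots> = (((\<lambda>p. \<delta> p b) ^^ Suc j) q, w)"
    using Suc.prems[of "Suc j"] by (simp add: buffer_delta_nonfinal)
  finally show ?case .
qed

lemma buffer_shift_letter:
  fixes \<delta> :: "'q::finite \<Rightarrow> 'a \<Rightarrow> 'q"
  assumes "group_aut \<delta>" "f \<in> F"
  shows "\<exists>u f'. f' \<in> F \<and> delta_star (buffer_delta \<delta> F) (f, w) u = (f', drop 1 (w @ [b]))"
proof -
  define g where "g = (\<lambda>p. \<delta> p b)"
  have "inj g"
    using assms(1) unfolding group_aut_def g_def bij_def by blast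
  then obtain n where "n > 0" "(g ^^ n) f = f"
    by (rule funpow_inj_finite) simp
  define m where "m = (LEAST n. 0 < n \<and> (g ^^ n) f \<in> F)"
  have m: "0 < m" "(g ^^ m) f \<in> F"
    using LeastI[of "\<lambda>n. 0 < n \<and> (g ^^ n) f \<in> F" n] \<open>n > 0\<close> \<open>(g ^^ n) f = f\<close> assms(2)
    unfolding m_def by auto
  have "(g ^^ i) f \<notin> F" if "0 < i" "i \<le> m - 1" for i
  proof -
    have "i < m" using that m(1) by linarith
    then show ?thesis
      using not_less_Least[of i "\<lambda>n. 0 < n \<and> (g ^^ n) f \<in> F"] that(1) unfolding m_def by blast
  qed
  then have "delta_star (buffer_delta \<delta> F) (f, w) (replicate (m - 1) b) = ((g ^^ (m - 1)) f, w)"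
    unfolding g_def by (rule delta_star_buffer_replicate_nonfinal)
  moreover have "\<delta> ((g ^^ (m - 1)) f) b = (g ^^ m) f"
    using m(1) by (cases m) (simp_all add: g_def)
  ultimately have "delta_star (buffer_delta \<delta> F) (f, w) (replicate (m - 1) b @ [b])
      = ((g ^^ m) f, drop 1 (w @ [b]))"
    using m(2) by (simp add: buffer_delta_final)
  then show ?thesis
    using m(2) by blast
qed

lemma buffer_shift_word:
  fixes \<delta> :: "'q::finite \<Rightarrow> 'a \<Rightarrow> 'q"
  assumes "group_aut \<delta>" "f \<in> F"
  shows "\<exists>u f'. f' \<in> F \<and> delta_star (buffer_delta \<delta> F) (f, w) u = (f', drop (length v) (w @ v))"
  using assms(2)
proof (induction v arbitrary: f w)
  case Nil
  show ?case
    using Nil by (intro exI[of _ "[]"]) auto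
next
  case (Cons b v)
  obtain u1 f1 where "f1 \<in> F" and u1: "delta_star (buffer_delta \<delta> F) (f, w) u1 = (f1, drop 1 (w @ [b]))"
    using buffer_shift_letter[OF assms(1) Cons.prems] by blast
  then obtain u2 f2 where "f2 \<in> F"
    and u2: "delta_star (buffer_delta \<delta> F) (f1, drop 1 (w @ [b])) u2
      = (f2, drop (length v) (drop 1 (w @ [b]) @ v))"
    using Cons.IH by blast
  have shift: "drop 1 (w @ [b]) @ v = drop 1 (w @ b # v)"
    by (cases w) simp_all
  have "drop (length v) (drop 1 (w @ [b]) @ v) = drop (length (b # v)) (w @ b # v)"
    by (simp only: shift drop_drop) simp
  then have "delta_star (buffer_delta \<delta> F) (f, w) (u1 @ u2) = (f2, drop (length (b # v)) (w @ b # v))"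
    using u1 u2 by simp
  then show ?case
    using \<open>f2 \<in> F\<close> by blast
qed

lemma buffer_reaches_every_content:
  fixes \<delta> :: "'q::finite \<Rightarrow> 'a \<Rightarrow> 'q"
  assumes "transitive_aut \<delta>" "group_aut \<delta>" "F \<noteq> {}" "t \<in> buffer_states (length v)"
  shows "\<exists>f\<in>F. (f, v) \<in> range (delta_star (buffer_delta \<delta> F) t)"
proof -
  let ?d = "buffer_delta \<delta> F"
  obtain f where "f \<in> F"
    using assms(3) by blast
  obtain w where "delta_star \<delta> (fst t) w = f"
    using assms(1) unfolding transitive_aut_def by blast
  then obtain c where c: "delta_star ?d t w = (f, c)"
    using fst_delta_star_buffer by (metis prod.collapse)
  have "length c = length v"
    using c assms(4) length_snd_delta_star_buffer[of \<delta> F t w] by (auto simp: buffer_states_def)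
  obtain u f' where "f' \<in> F" "delta_star ?d (f, c) u = (f', drop (length v) (c @ v))"
    using buffer_shift_word[OF assms(2) \<open>f \<in> F\<close>] by blast
  then have "delta_star ?d t (w @ u) = (f', v)"
    using c \<open>length c = length v\<close> by simp
  then show ?thesis
    using \<open>f' \<in> F\<close> by (metis rangeI)
qed

theorem lemma4p2:
  fixes \<delta> :: "'q::finite \<Rightarrow> 'a::finite \<Rightarrow> 'q"
    and F :: "'q set" and k :: nat
    and x :: "nat \<Rightarrow> 'a" and s :: "'q \<times> 'a list"
  assumes "transitive_aut \<delta>" and "group_aut \<delta>" and "F \<noteq> {}"
    and "normal_seq x"
    and "s \<in> buffer_states k"
  shows "\<exists>Q' \<subseteq> buffer_states k.
           (\<forall>t\<in>Q'. \<forall>a. buffer_delta \<delta> F t a \<in> Q') \<and>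
           (\<forall>s1\<in>Q'. \<forall>s2\<in>Q'. \<exists>u. delta_star (buffer_delta \<delta> F) s1 u = s2) \<and>
           buffer_final F k \<inter> Q' \<noteq> {} \<and>
           (\<exists>N. \<forall>i\<ge>N. snd ((aug_map \<delta> F ^^ i) (x, s)) \<in> Q') \<and>
           (\<forall>v. length v = k \<longrightarrow> (\<exists>q. (q, v) \<in> Q'))"
proof -
  let ?d = "buffer_delta \<delta> F"
  have closed: "\<forall>t\<in>buffer_states k. \<forall>a. ?d t a \<in> buffer_states k"
    by (intro ballI allI buffer_delta_in_states)
  obtain N where recurrent: "recurrent ?d (delta_star ?d s (map x [0..<N]))"
    using ex_recurrent_prefix[OF finite_buffer_states closed assms(5)] normal_seq_occurs[OF assms(4)]
    by blast
  define t where "t = delta_star ?d s (map x [0..<N])"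
  define Q' where "Q' = range (delta_star ?d t)"
  have "t \<in> buffer_states k"
    unfolding t_def using delta_star_closed[OF closed assms(5)] .
  then have sub: "Q' \<subseteq> buffer_states k"
    unfolding Q'_def using delta_star_closed[OF closed] by blast
  have Q'_closed: "\<forall>t'\<in>Q'. \<forall>a. ?d t' a \<in> Q'"
    unfolding Q'_def by (intro ballI allI reachable_step)
  have connected: "\<forall>s1\<in>Q'. \<forall>s2\<in>Q'. \<exists>u. delta_star ?d s1 u = s2"
    unfolding Q'_def by (intro ballI recurrent_strongly_connected[OF recurrent[folded t_def]])
  have eventually_in: "\<forall>i\<ge>N. snd ((aug_map \<delta> F ^^ i) (x, s)) \<in> Q'"
    unfolding Q'_def t_def aug_map_funpow snd_conv by (intro allI impI delta_star_upt_reachable)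
  have final_content: "\<exists>f\<in>F. (f, v) \<in> Q'" if "length v = k" for v
    using buffer_reaches_every_content[OF assms(1-3)] \<open>t \<in> buffer_states k\<close> that
    unfolding Q'_def by blast
  then have final: "buffer_final F k \<inter> Q' \<noteq> {}"
    unfolding buffer_final_def by (simp add: disjoint_iff) (metis length_replicate)
  have words: "\<forall>v. length v = k \<longrightarrow> (\<exists>q. (q, v) \<in> Q')"
    using final_content by blast
  show ?thesis
    by (intro exI[of _ Q'] conjI exI[of _ N] sub Q'_closed connected final eventually_in words)
qed

end
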